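(* Let $k, r, a, b, m, n$ be integers satisfying $$k\geq 1,\quad 0\leq a\leq m,\quad \max\{0,ka-r\}<b\leq n,\quad n>km-r.$$ Let $\mathcal{L}_{k,r}(a,b;m,n)$ be the set of lattice paths from $(a,b)$ to $(m,n)$ with unit steps $(1,0)$ and $(0,1)$ that stay strictly above the line $y=kx-r$. Then $$|\mathcal{L}_{k,r}(a,b;m,n)|=\sum_{i=0}^{\lfloor\frac{b+r-1-ka}{k+1}\rfloor}(-1)^i\,\frac{n+r-km}{m+n+r-(k+1)(a+i)}\binom{m+n+r-(k+1)(a+i)}{m-a-i}\binom{b+r-1-k(a+i)}{i}.$$
   Context: A path stays strictly above the line $y=kx-r$ if every lattice point $(x,y)$ on it satisfies $y> kx-r$. $\lfloor x\rfloor$ is the floor function. Binomial coefficients $\binom{N}{j}$ with $N\ge0$ equal $0$ when $j<0$ or $j>N$. *)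

theory Defs
  imports Complex_Main
begin

text \<open>A lattice path with unit steps is encoded by its list of steps:
  True = east step (1,0), False = north step (0,1).\<close>

fun step_pt :: "bool \<Rightarrow> int \<times> int \<Rightarrow> int \<times> int" where
  "step_pt s (x, y) = (if s then (x + 1, y) else (x, y + 1))"

fun path_points :: "int \<times> int \<Rightarrow> bool list \<Rightarrow> (int \<times> int) list" where
  "path_points p [] = [p]"
| "path_points p (s # ss) = p # path_points (step_pt s p) ss"

definition path_end :: "int \<times> int \<Rightarrow> bool list \<Rightarrow> int \<times> int" where
  "path_end p ss = last (path_points p ss)"

definition lpaths :: "int \<Rightarrow> int \<Rightarrow> int \<Rightarrow> int \<Rightarrow> int \<Rightarrow> int \<Rightarrow> bool list set" where
  "lpaths k r a b m n =
     {ss. path_end (a, b) ss = (m, n) \<and>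
          (\<forall>(x, y) \<in> set (path_points (a, b) ss). y > k * x - r)}"

text \<open>Integer binomial coefficient with the convention binom N j = 0 for j < 0 or j > N (N \<ge> 0).\<close>
definition binom :: "int \<Rightarrow> int \<Rightarrow> int" where
  "binom N j = (if 0 \<le> j \<and> j \<le> N then int (nat N choose nat j) else 0)"

end

theory Submission imports Defs begin

text \<open>The number of paths from (c, kc - r + 1), the lowest point above the line at abscissa c,
  to the point u east and w north of it satisfies the last-step recursion and vanishes when the
  end point lies on the line. So does the ballot number
  \<open>binom (L-1) u - k binom (L-1) (u-1) = (w - k u)/L * binom L u\<close>, where L = u + w, by
  Pascal's rule and the absorption identities; hence the two agree.
  For a general start (x, y) the first-step recursion reads
  \<open>N(x, y+1) = N(x, y) - N(x+1, y)\<close>. The alternating sum of the theorem, with the ballot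
  numbers replaced by the counts of paths from (x + i, k(x + i) - r + 1), satisfies the same
  recursion by Pascal's rule in its second binomial, and it agrees with N on the line.
  Induction on the height of the start above the line gives the theorem.\<close>

lemma path_points_neq_Nil: "path_points p ss \<noteq> []"
  by (cases ss) auto

lemma path_end_Nil [simp]: "path_end p [] = p"
  by (simp add: path_end_def)

lemma path_end_Cons [simp]: "path_end p (s # ss) = path_end (step_pt s p) ss"
  by (simp add: path_end_def path_points_neq_Nil)

lemma path_end_eq:
  "path_end (x, y) ss = (x + int (length (filter id ss)), y + int (length (filter Not ss)))"
proof (induction ss arbitrary: x y)
  case Nil
  then show ?case by simp
next
  case (Cons s ss)
  then show ?case by (cases s) auto
qed

lemma start_in_path_points: "p \<in> set (path_points p ss)"
  by (cases ss) auto

lemma path_end_in_path_points: "path_end p ss \<in> set (path_points p ss)"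
  by (simp add: path_end_def path_points_neq_Nil)

lemma path_points_snoc:
  "path_points p (ss @ [s]) = path_points p ss @ [step_pt s (path_end p ss)]"
  by (induction ss arbitrary: p) auto

lemma path_end_snoc: "path_end p (ss @ [s]) = step_pt s (path_end p ss)"
  by (simp add: path_end_def path_points_snoc)

lemma lpaths_length:
  assumes "ss \<in> lpaths k r a b m n"
  shows "int (length ss) = (m - a) + (n - b)" and "a \<le> m" and "b \<le> n"
proof -
  have "path_end (a, b) ss = (m, n)"
    using assms by (simp add: lpaths_def)
  then have "m = a + int (length (filter id ss))" "n = b + int (length (filter Not ss))"
    by (auto simp: path_end_eq)
  moreover have "length (filter id ss) + length (filter Not ss) = length ss"
    using sum_length_filter_compl[of id ss] by (simp add: comp_def)
  ultimately show "int (length ss) = (m - a) + (n - b)" "a \<le> m" "b \<le> n"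
    by linarith+
qed

lemma finite_lpaths: "finite (lpaths k r a b m n)"
proof (rule finite_subset)
  show "lpaths k r a b m n \<subseteq> {ss. set ss \<subseteq> UNIV \<and> length ss = nat ((m - a) + (n - b))}"
    using lpaths_length(1) by fastforce
qed (rule finite_lists_length_eq, simp)

lemma lpaths_eq_empty_if_behind: "m < a \<or> n < b \<Longrightarrow> lpaths k r a b m n = {}"
  using lpaths_length(2,3) by fastforce

lemma lpaths_eq_empty_if_start_not_above: "b \<le> k * a - r \<Longrightarrow> lpaths k r a b m n = {}"
  unfolding lpaths_def using start_in_path_points by fastforce

lemma lpaths_eq_empty_if_end_not_above: "n \<le> k * m - r \<Longrightarrow> lpaths k r a b m n = {}"
  unfolding lpaths_def using path_end_in_path_points by fastforce

lemma lpaths_same_ends: "k * a - r < b \<Longrightarrow> lpaths k r a b a b = {[]}"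
  using lpaths_length(1)[of _ k r a b a b] by (fastforce simp: lpaths_def)

lemma lpaths_first_step:
  assumes "k * a - r < b" and "(a, b) \<noteq> (m, n)"
  shows "lpaths k r a b m n =
    Cons True ` lpaths k r (a + 1) b m n \<union> Cons False ` lpaths k r a (b + 1) m n"
proof (intro equalityI subsetI)
  fix ss
  assume ss: "ss \<in> lpaths k r a b m n"
  with assms(2) obtain s t where st: "ss = s # t"
    by (cases ss) (auto simp: lpaths_def)
  show "ss \<in> Cons True ` lpaths k r (a + 1) b m n \<union> Cons False ` lpaths k r a (b + 1) m n"
    using ss unfolding st by (cases s) (auto simp: lpaths_def)
qed (use assms(1) in \<open>auto simp: lpaths_def\<close>)

lemma card_lpaths_first_step:
  assumes "k * a - r < b" and "(a, b) \<noteq> (m, n)"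
  shows "card (lpaths k r a b m n) =
    card (lpaths k r (a + 1) b m n) + card (lpaths k r a (b + 1) m n)"
  unfolding lpaths_first_step[OF assms]
  by (subst card_Un_disjoint) (auto simp: finite_lpaths card_image)

lemma lpaths_last_step:
  assumes "k * m - r < n" and "(a, b) \<noteq> (m, n)"
  shows "lpaths k r a b m n =
    (\<lambda>t. t @ [True]) ` lpaths k r a b (m - 1) n \<union> (\<lambda>t. t @ [False]) ` lpaths k r a b m (n - 1)"
proof (intro equalityI subsetI)
  fix ss
  assume ss: "ss \<in> lpaths k r a b m n"
  with assms(2) obtain s t where st: "ss = t @ [s]"
    by (cases ss rule: rev_exhaust) (auto simp: lpaths_def)
  obtain x y where xy: "path_end (a, b) t = (x, y)"
    by fastforce
  have "step_pt s (x, y) = (m, n)"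
    using ss xy by (simp add: st lpaths_def path_end_snoc)
  moreover have "\<forall>(x, y) \<in> set (path_points (a, b) t). k * x - r < y"
    using ss by (simp add: st lpaths_def path_points_snoc)
  ultimately show "ss \<in> (\<lambda>t. t @ [True]) ` lpaths k r a b (m - 1) n
      \<union> (\<lambda>t. t @ [False]) ` lpaths k r a b m (n - 1)"
    using xy unfolding st by (cases s) (auto simp: lpaths_def)
qed (use assms(1) in \<open>auto simp: lpaths_def path_points_snoc path_end_snoc\<close>)

lemma card_lpaths_last_step:
  assumes "k * m - r < n" and "(a, b) \<noteq> (m, n)"
  shows "card (lpaths k r a b m n) =
    card (lpaths k r a b (m - 1) n) + card (lpaths k r a b m (n - 1))"
  unfolding lpaths_last_step[OF assms]
  by (subst card_Un_disjoint) (auto simp: finite_lpaths card_image inj_on_def)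

lemma binom_eq_0_if_neg [simp]: "j < 0 \<Longrightarrow> binom N j = 0"
  by (simp add: binom_def)

lemma binom_eq_0_if_gt: "N < j \<Longrightarrow> binom N j = 0"
  by (simp add: binom_def)

lemma binom_0_right: "0 \<le> N \<Longrightarrow> binom N 0 = 1"
  by (simp add: binom_def)

lemma binom_of_nat: "binom (int l) (int j) = int (l choose j)"
  by (simp add: binom_def binomial_eq_0)

lemma binom_pascal:
  assumes "0 \<le> N \<or> 1 \<le> j"
  shows "binom (N + 1) j = binom N j + binom N (j - 1)"
proof (cases "0 \<le> N \<and> 1 \<le> j")
  case True
  define l i where "l = nat N" and "i = nat (j - 1)"
  then have "N + 1 = int (Suc l)" "N = int l" "j = int (Suc i)" "j - 1 = int i"
    using True by auto
  then show ?thesis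
    by (metis binom_of_nat binomial_Suc_Suc of_nat_add add.commute)
next
  case False
  with assms show ?thesis
    by (cases "j = 0") (auto simp: binom_eq_0_if_gt binom_0_right)
qed

lemma binom_absorb_comp:
  assumes "1 \<le> L"
  shows "L * binom (L - 1) u = (L - u) * binom L u"
proof (cases "0 \<le> u \<and> u \<le> L")
  case True
  define l j where "l = nat (L - 1)" and "j = nat u"
  then have lj: "L = int (Suc l)" "L - 1 = int l" "u = int j" "j \<le> Suc l"
    using assms True by auto
  have "int (Suc l - j) * int (Suc l choose j) = int (Suc l) * int (l choose j)"
    by (metis of_nat_mult binomial_absorb_comp diff_Suc_1)
  then show ?thesis
    using lj by (simp only: binom_of_nat of_nat_diff)
qed (auto simp: binom_eq_0_if_gt)

lemma binom_absorption:
  assumes "1 \<le> L"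
  shows "L * binom (L - 1) (u - 1) = u * binom L u"
proof (cases "1 \<le> u \<and> u \<le> L")
  case True
  define l j where "l = nat (L - 1)" and "j = nat (u - 1)"
  then have "L = int (Suc l)" "L - 1 = int l" "u = int (Suc j)" "u - 1 = int j"
    using True by auto
  then show ?thesis
    by (metis binom_of_nat of_nat_mult Suc_times_binomial_eq mult.commute)
next
  case False
  then show ?thesis
    by (cases "u < 0") (auto simp: binom_eq_0_if_gt)
qed
definition ballot_number :: "int \<Rightarrow> int \<Rightarrow> int \<Rightarrow> int" where
  "ballot_number k u w = binom (u + w - 1) u - k * binom (u + w - 1) (u - 1)"

lemma ballot_number_pascal:
  "2 \<le> u + w \<Longrightarrow> ballot_number k u w = ballot_number k (u - 1) w + ballot_number k u (w - 1)"
  using binom_pascal[of "u + w - 2" u] binom_pascal[of "u + w - 2" "u - 1"]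
  by (simp add: ballot_number_def algebra_simps)

lemma ballot_number_minus_one [simp]: "ballot_number k (-1) w = 0"
  by (simp add: ballot_number_def)

lemma ballot_number_mult:
  assumes "1 \<le> u + w"
  shows "(u + w) * ballot_number k u w = (w - k * u) * binom (u + w) u"
  using binom_absorb_comp[OF assms, of u] binom_absorption[OF assms, of u]
  by (simp add: ballot_number_def algebra_simps)

lemma ballot_number_on_line:
  assumes "1 \<le> u" and "0 \<le> k"
  shows "ballot_number k u (k * u) = 0"
proof -
  have "1 \<le> u + k * u"
    using assms by (simp add: add_increasing2)
  from ballot_number_mult[OF this, of k] this show ?thesis
    by simp
qed

lemma ballot_number_closed_form:
  assumes "0 \<le> u" and "1 \<le> w"
  shows "real_of_int (ballot_number k u w) =
    real_of_int (w - k * u) / real_of_int (u + w) * real_of_int (binom (u + w) u)"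
proof -
  have "real_of_int ((u + w) * ballot_number k u w) = real_of_int ((w - k * u) * binom (u + w) u)"
    using assms by (simp only: ballot_number_mult)
  with assms show ?thesis
    by (simp add: field_simps)
qed

lemma card_lpaths_from_line:
  assumes "1 \<le> k"
  shows "c \<le> X \<Longrightarrow> k * X - r < Y \<Longrightarrow>
    int (card (lpaths k r c (k * c - r + 1) X Y)) = ballot_number k (X - c) (Y - (k * c - r))"
proof (induction "nat ((X - c) + (Y - (k * c - r + 1)))" arbitrary: X Y rule: less_induct)
  case less
  have kc: "k * c \<le> k * X"
    using assms less.prems(1) by simp
  show ?case
  proof (cases "(X, Y) = (c, k * c - r + 1)")
    case True
    then show ?thesis
      using lpaths_same_ends[of k c r] by (simp add: ballot_number_def binom_0_right)
  next
    case False
    have w: "1 \<le> Y - (k * c - r)"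
      using less.prems kc by linarith
    have west: "int (card (lpaths k r c (k * c - r + 1) (X - 1) Y))
        = ballot_number k (X - c - 1) (Y - (k * c - r))"
    proof (cases "c \<le> X - 1")
      case True
      then show ?thesis
        using less.hyps[of "X - 1" Y] less.prems assms w by (simp add: algebra_simps)
    next
      case False
      then show ?thesis
        using less.prems lpaths_eq_empty_if_behind[of "X - 1" c] by simp
    qed
    have south: "int (card (lpaths k r c (k * c - r + 1) X (Y - 1)))
        = ballot_number k (X - c) (Y - (k * c - r) - 1)"
    proof (cases "k * X - r < Y - 1")
      case True
      then show ?thesis
        using less.hyps[of X "Y - 1"] less.prems kc by (simp add: algebra_simps)
    next
      case on_line: False
      then have Y: "Y = k * X - r + 1"
        using less.prems by simp
      with False have "X \<noteq> c"
        by auto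
      with Y less.prems have "Y - (k * c - r) - 1 = k * (X - c)" and "1 \<le> X - c"
        by (auto simp: algebra_simps)
      then show ?thesis
        using on_line lpaths_eq_empty_if_end_not_above ballot_number_on_line assms by simp
    qed
    have "2 \<le> (X - c) + (Y - (k * c - r))"
      using False less.prems w kc by (auto simp: algebra_simps)
    moreover have "card (lpaths k r c (k * c - r + 1) X Y) =
        card (lpaths k r c (k * c - r + 1) (X - 1) Y) + card (lpaths k r c (k * c - r + 1) X (Y - 1))"
      using card_lpaths_last_step less.prems(2) False by (metis prod.inject)
    ultimately show ?thesis
      using west south ballot_number_pascal by simp
  qed
qed

lemma card_lpaths_from_line_closed_form:
  assumes "1 \<le> k" and "k * m - r < n"
  shows "real (card (lpaths k r c (k * c - r + 1) m n)) =
    real_of_int (n + r - k * m) / real_of_int (m + n + r - (k + 1) * c)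
      * real_of_int (binom (m + n + r - (k + 1) * c) (m - c))"
proof (cases "c \<le> m")
  case True
  then have w: "1 \<le> n - (k * c - r)"
    using assms mult_left_mono[of c m k] by linarith
  have "real (card (lpaths k r c (k * c - r + 1) m n))
      = real_of_int (ballot_number k (m - c) (n - (k * c - r)))"
    using card_lpaths_from_line[OF assms(1) True assms(2)] by (metis of_int_of_nat_eq)
  also have "\<dots> = real_of_int (n + r - k * m) / real_of_int (m + n + r - (k + 1) * c)
      * real_of_int (binom (m + n + r - (k + 1) * c) (m - c))"
    using True w
    by (subst ballot_number_closed_form) (simp_all add: algebra_simps)
  finally show ?thesis .
qed (simp add: lpaths_eq_empty_if_behind)

text \<open>The summand of the theorem, with the ballot number replaced by the number of paths it
  counts.\<close>

definition alt_term :: "int \<Rightarrow> int \<Rightarrow> int \<Rightarrow> int \<Rightarrow> int \<Rightarrow> int \<Rightarrow> nat \<Rightarrow> int" where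
  "alt_term k r m n x y i = (-1) ^ i
     * int (card (lpaths k r (x + int i) (k * (x + int i) - r + 1) m n))
     * binom (y + r - 1 - k * (x + int i)) (int i)"

definition alt_sum :: "int \<Rightarrow> int \<Rightarrow> int \<Rightarrow> int \<Rightarrow> nat \<Rightarrow> int \<Rightarrow> int \<Rightarrow> int" where
  "alt_sum k r m n K x y = (\<Sum>i\<le>K. alt_term k r m n x y i)"

lemma alt_term_eq_0_if_beyond: "m < x + int i \<Longrightarrow> alt_term k r m n x y i = 0"
  by (simp add: alt_term_def lpaths_eq_empty_if_behind)

lemma alt_term_eq_0_if_low: "y + r - 1 - k * (x + int i) < int i \<Longrightarrow> alt_term k r m n x y i = 0"
  by (simp add: alt_term_def binom_eq_0_if_gt)

lemma alt_sum_truncate: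
  assumes "J \<le> K" and "\<And>i. J < i \<Longrightarrow> i \<le> K \<Longrightarrow> alt_term k r m n x y i = 0"
  shows "alt_sum k r m n K x y = alt_sum k r m n J x y"
  unfolding alt_sum_def using assms by (intro sum.mono_neutral_right) auto

lemma alt_sum_step:
  assumes "0 \<le> y + r - 1 - k * x"
  shows "alt_sum k r m n (Suc K) x (y + 1) = alt_sum k r m n (Suc K) x y - alt_sum k r m n K (x + 1) y"
proof -
  have "alt_term k r m n x (y + 1) (Suc i) = alt_term k r m n x y (Suc i) - alt_term k r m n (x + 1) y i"
    for i
    using binom_pascal[of "y + r - 1 - k * (x + int (Suc i))" "int (Suc i)"]
    by (simp add: alt_term_def algebra_simps)
  moreover have "alt_term k r m n x (y + 1) 0 = alt_term k r m n x y 0"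
    using assms by (simp add: alt_term_def binom_0_right)
  ultimately show ?thesis
    unfolding alt_sum_def sum.atMost_Suc_shift by (simp add: sum_subtractf)
qed

lemma alt_sum_on_line:
  assumes "1 \<le> k"
  shows "alt_sum k r m n K x (k * x - r + 1) = int (card (lpaths k r x (k * x - r + 1) m n))"
proof -
  have "alt_sum k r m n K x (k * x - r + 1) = alt_sum k r m n 0 x (k * x - r + 1)"
  proof (rule alt_sum_truncate)
    fix i :: nat
    assume "0 < i"
    moreover have "0 \<le> k * int i"
      using assms by simp
    ultimately show "alt_term k r m n x (k * x - r + 1) i = 0"
      by (intro alt_term_eq_0_if_low) (simp add: algebra_simps)
  qed simp
  then show ?thesis
    by (simp add: alt_sum_def alt_term_def binom_0_right)
qed

lemma alt_sum_below_line:
  assumes "1 \<le> k" and "y \<le> k * x - r"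
  shows "alt_sum k r m n K x y = 0"
proof -
  have "alt_term k r m n x y i = 0" for i
  proof (rule alt_term_eq_0_if_low)
    have "0 \<le> k * int i"
      using assms by simp
    with assms show "y + r - 1 - k * (x + int i) < int i"
      unfolding distrib_left by linarith
  qed
  then show ?thesis
    by (simp add: alt_sum_def)
qed

lemma card_lpaths_eq_alt_sum:
  assumes "1 \<le> k"
  shows "k * x - r < y \<Longrightarrow> y \<le> n \<Longrightarrow> m - x \<le> int K \<Longrightarrow>
    int (card (lpaths k r x y m n)) = alt_sum k r m n K x y"
proof (induction "nat (y - (k * x - r + 1))" arbitrary: x y K rule: less_induct)
  case less
  show ?case
  proof (cases "y = k * x - r + 1")
    case True
    then show ?thesis
      using alt_sum_on_line[OF assms] by simp
  next
    case False
    define y0 where "y0 = y - 1"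
    then have y: "y = y0 + 1" and above: "k * x - r < y0"
      using False less.prems by auto
    have start: "int (card (lpaths k r x y0 m n)) = alt_sum k r m n (Suc K) x y0"
      by (rule less.hyps) (use above less.prems in \<open>auto simp: y\<close>)
    have east: "int (card (lpaths k r (x + 1) y0 m n)) = alt_sum k r m n K (x + 1) y0"
    proof (cases "k * (x + 1) - r < y0")
      case True
      then show ?thesis
        by (intro less.hyps) (use assms less.prems in \<open>auto simp: y algebra_simps\<close>)
    next
      case False
      then show ?thesis
        using alt_sum_below_line[OF assms] lpaths_eq_empty_if_start_not_above by simp
    qed
    have "alt_sum k r m n K x y = alt_sum k r m n (Suc K) x y"
    proof (rule alt_sum_truncate[symmetric])
      fix i
      assume "K < i"
      then show "alt_term k r m n x y i = 0"
        using less.prems(3) by (intro alt_term_eq_0_if_beyond) linarith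
    qed simp
    also have "\<dots> = alt_sum k r m n (Suc K) x y0 - alt_sum k r m n K (x + 1) y0"
      unfolding y using above by (intro alt_sum_step) simp
    moreover have "card (lpaths k r x y0 m n) = card (lpaths k r (x + 1) y0 m n) + card (lpaths k r x y m n)"
      using card_lpaths_first_step[of k x r y0 m n] less.prems(2) above by (simp add: y)
    ultimately show ?thesis
      using start east by linarith
  qed
qed

lemma alt_term_closed_form:
  assumes "1 \<le> k" and "k * m - r < n"
  shows "real_of_int (alt_term k r m n x y i) = (-1) ^ i
    * (real_of_int (n + r - k * m) / real_of_int (m + n + r - (k + 1) * (x + int i)))
    * real_of_int (binom (m + n + r - (k + 1) * (x + int i)) (m - x - int i))
    * real_of_int (binom (y + r - 1 - k * (x + int i)) (int i))"
  using card_lpaths_from_line_closed_form[OF assms, of "x + int i"]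
  by (simp add: alt_term_def diff_diff_eq)

lemma less_mult_if_div_less:
  fixes X d i :: int
  assumes "0 < d" and "X div d < i"
  shows "X < d * i"
proof -
  have "d * (X div d + 1) \<le> d * i"
    using assms by (intro mult_left_mono) auto
  moreover have "X mod d < d"
    using assms(1) by (rule pos_mod_bound)
  ultimately show ?thesis
    using mult_div_mod_eq[of d X] unfolding distrib_left mult_1_right by linarith
qed

lemma sum_atLeastAtMost_int_eq_sum_atMost:
  "0 \<le> q \<Longrightarrow> (\<Sum>i\<in>{0..q}. f i) = (\<Sum>j\<le>nat q. f (int j))"
  by (rule sum.reindex_bij_witness[of _ int nat]) auto

theorem corollary2p1:
  fixes k r a b m n :: int
  assumes "k \<ge> 1" and "0 \<le> a" and "a \<le> m"
    and "max 0 (k * a - r) < b" and "b \<le> n" and "n > k * m - r"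
  shows "real (card (lpaths k r a b m n)) =
    (\<Sum>i \<in> {0..\<lfloor>real_of_int (b + r - 1 - k * a) / real_of_int (k + 1)\<rfloor>}.
        (-1) ^ nat i
        * (real_of_int (n + r - k * m) / real_of_int (m + n + r - (k + 1) * (a + i)))
        * real_of_int (binom (m + n + r - (k + 1) * (a + i)) (m - a - i))
        * real_of_int (binom (b + r - 1 - k * (a + i)) i))"
proof -
  define q where "q = (b + r - 1 - k * a) div (k + 1)"
  have floor_eq: "\<lfloor>real_of_int (b + r - 1 - k * a) / real_of_int (k + 1)\<rfloor> = q"
    unfolding q_def by (rule floor_divide_of_int_eq)
  have "0 \<le> q"
    using assms by (simp add: q_def pos_imp_zdiv_nonneg_iff)
  have "int (card (lpaths k r a b m n)) = alt_sum k r m n (nat (m - a) + nat q) a b"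
    using assms by (intro card_lpaths_eq_alt_sum) auto
  also have "\<dots> = alt_sum k r m n (nat q) a b"
  proof (rule alt_sum_truncate)
    fix i :: nat
    assume "nat q < i"
    then have "b + r - 1 - k * a < (k + 1) * int i"
      using assms(1) unfolding q_def by (intro less_mult_if_div_less) auto
    then show "alt_term k r m n a b i = 0"
      by (intro alt_term_eq_0_if_low) (simp add: algebra_simps)
  qed simp
  finally have "real (card (lpaths k r a b m n)) = (\<Sum>j\<le>nat q. real_of_int (alt_term k r m n a b j))"
    unfolding alt_sum_def by (metis of_int_of_nat_eq of_int_sum)
  then show ?thesis
    using assms(1,6) \<open>0 \<le> q\<close>
    by (simp only: floor_eq sum_atLeastAtMost_int_eq_sum_atMost alt_term_closed_form nat_int)
qed

end
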